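(* Let $(M,d,0_M)$ be an unbounded pointed metric space, $(N,d,0_N)$ any pointed metric space and $f\colon M\to N$ any map. Suppose $f$ satisfies: $(P_3)$ for every sequence $(x_n,y_n)_n$ in $M\times M$ with $x_n\ne y_n$ and $\lim_n d(x_n,0_M)=\lim_n d(y_n,0_M)=\infty$, either $(f(x_n),f(y_n))_n$ has an accumulation point in $N\times N$, or $\liminf_{n\to\infty}\frac{d(f(x_n),f(y_n))}{d(x_n,y_n)}=0$. Then $f$ is radially flat, i.e. $$\lim_{d(x,0_M)\to\infty}\frac{d(f(x),0_N)}{d(x,0_M)}=0.$$ *)

theory Defs
  imports "HOL-Analysis.Analysis"
begin

definition seq_accumulation_point :: "(nat \<Rightarrow> 'a::topological_space) \<Rightarrow> 'a \<Rightarrow> bool" where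
  "seq_accumulation_point s p \<longleftrightarrow>
     (\<forall>U. open U \<and> p \<in> U \<longrightarrow> (\<exists>\<^sub>F n in sequentially. s n \<in> U))"

definition at_far :: "'a::metric_space \<Rightarrow> 'a filter" where
  "at_far z = filtercomap (\<lambda>x. dist x z) at_top"

definition P3 :: "'a::metric_space \<Rightarrow> ('a \<Rightarrow> 'b::metric_space) \<Rightarrow> bool" where
  "P3 zM f \<longleftrightarrow>
     (\<forall>x y :: nat \<Rightarrow> 'a.
        (\<forall>n. x n \<noteq> y n) \<and>
        filterlim (\<lambda>n. dist (x n) zM) at_top sequentially \<and>
        filterlim (\<lambda>n. dist (y n) zM) at_top sequentially \<longrightarrow>
        (\<exists>p. seq_accumulation_point (\<lambda>n. (f (x n), f (y n))) p) \<or>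
        Liminf sequentially (\<lambda>n. ereal (dist (f (x n)) (f (y n)) / dist (x n) (y n))) = 0)"

definition radially_flat :: "'a::metric_space \<Rightarrow> 'b::metric_space \<Rightarrow> ('a \<Rightarrow> 'b) \<Rightarrow> bool" where
  "radially_flat zM zN f \<longleftrightarrow>
     ((\<lambda>x. dist (f x) zN / dist x zM) \<longlongrightarrow> 0) (at_far zM)"

end

theory Submission
  imports Defs
begin

text \<open>If f is not radially flat, there are e > 0 and points x arbitrarily far out with
  d(f x, 0_N) \<ge> e d(x, 0_M). Choosing them inductively so that both d(x_n, 0_M) and
  d(f x_n, 0_N) grow fast enough, consecutive points satisfy d(x_{n+1}, x_n) \<le> 2 d(x_{n+1}, 0_M)
  and d(f x_{n+1}, f x_n) \<ge> d(f x_{n+1}, 0_N) / 2, so their difference quotients stay above e/4,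
  while the image pairs escape to infinity and hence have no accumulation point.
  This contradicts (P3).\<close>

lemma filterlim_at_top_if_unit_increments:
  fixes u :: "nat \<Rightarrow> real"
  assumes "\<And>n. u n + 1 \<le> u (Suc n)"
  shows "filterlim u at_top sequentially"
proof -
  have "u 0 + real n \<le> u n" for n
    using assms by (induction n) (auto intro: order_trans[OF _ assms])
  then show ?thesis
    by (intro filterlim_at_top_mono[OF filterlim_tendsto_add_at_top[OF tendsto_const[of "u 0"]
          filterlim_real_sequentially]]) auto
qed

lemma not_seq_accumulation_point_if_escaping:
  fixes s :: "nat \<Rightarrow> 'a::metric_space"
  assumes "filterlim (\<lambda>n. dist (s n) z) at_top sequentially"
  shows "\<not> seq_accumulation_point s p"
proof
  assume "seq_accumulation_point s p"
  then have "\<exists>\<^sub>F n in sequentially. s n \<in> ball p 1"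
    unfolding seq_accumulation_point_def by (meson centre_in_ball open_ball zero_less_one)
  moreover have "\<forall>\<^sub>F n in sequentially. dist p z + 1 < dist (s n) z"
    using assms by (simp add: filterlim_at_top_dense)
  then have "\<forall>\<^sub>F n in sequentially. s n \<notin> ball p 1"
  proof eventually_elim
    fix n assume "dist p z + 1 < dist (s n) z"
    then show "s n \<notin> ball p 1"
      unfolding mem_ball using dist_triangle[of "s n" z p] dist_commute[of p "s n"] by linarith
  qed
  ultimately show False
    by (simp add: frequently_def)
qed

lemma filterlim_dist_Pair_at_top_if_fst:
  assumes "filterlim (\<lambda>n. dist (a n) z) at_top sequentially"
  shows "filterlim (\<lambda>n. dist (a n, b n) (z, w)) at_top sequentially"
  using assms by (rule filterlim_at_top_mono) (use dist_fst_le[of "(a n, b n)" "(z, w)" for n] in simp)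

lemma not_radially_flat_imp_far_points:
  assumes "\<not> radially_flat zM zN f"
  obtains e where "e > 0" and "\<And>R. \<exists>x. R \<le> dist x zM \<and> e * dist x zM \<le> dist (f x) zN"
proof -
  obtain e :: real where e: "e > 0"
    and not_ev: "\<not> eventually (\<lambda>x. dist (dist (f x) zN / dist x zM) 0 < e) (at_far zM)"
    using assms unfolding radially_flat_def tendsto_iff by blast
  have "\<exists>x. R \<le> dist x zM \<and> e * dist x zM \<le> dist (f x) zN" for R
  proof (rule ccontr)
    assume "\<nexists>x. R \<le> dist x zM \<and> e * dist x zM \<le> dist (f x) zN"
    then have small: "dist (f x) zN < e * dist x zM" if "max R 1 \<le> dist x zM" for x
      using that by force
    have "eventually (\<lambda>x. dist (dist (f x) zN / dist x zM) 0 < e) (at_far zM)"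
      unfolding at_far_def eventually_filtercomap
    proof (intro exI conjI allI impI)
      show "eventually (\<lambda>t. max R 1 \<le> t) at_top" by (rule eventually_ge_at_top)
      fix x assume "max R 1 \<le> dist x zM"
      with small[OF this] \<open>e > 0\<close> show "dist (dist (f x) zN / dist x zM) 0 < e"
        by (simp add: divide_less_eq)
    qed
    with not_ev show False by blast
  qed
  with e that show ?thesis by blast
qed

lemma far_sequence_with_fast_growing_image:
  fixes e :: real
  assumes "e > 0" and far: "\<And>R. \<exists>x. R \<le> dist x zM \<and> e * dist x zM \<le> dist (f x) zN"
  obtains s where "\<And>n. e * dist (s n) zM \<le> dist (f (s n)) zN"
    and "\<And>n. dist (s n) zM + 1 \<le> dist (s (Suc n)) zM"
    and "\<And>n. 2 * dist (f (s n)) zN + 1 \<le> dist (f (s (Suc n))) zN"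
proof -
  let ?P = "\<lambda>_::nat. \<lambda>x. e * dist x zM \<le> dist (f x) zN"
  let ?Q = "\<lambda>_::nat. \<lambda>x y. dist x zM + 1 \<le> dist y zM \<and> 2 * dist (f x) zN + 1 \<le> dist (f y) zN"
  have "\<exists>s. \<forall>n. ?P n (s n) \<and> ?Q n (s n) (s (Suc n))"
  proof (rule dependent_nat_choice)
    show "\<exists>x. ?P 0 x" using far by blast
  next
    fix x n
    obtain y where y: "max (dist x zM + 1) ((2 * dist (f x) zN + 1) / e) \<le> dist y zM"
      and fy: "e * dist y zM \<le> dist (f y) zN"
      using far by blast
    have "2 * dist (f x) zN + 1 \<le> e * dist y zM"
      using mult_left_mono[OF order_trans[OF max.cobounded2 y], of e] \<open>e > 0\<close> by simp
    with y fy show "\<exists>y. ?P (Suc n) y \<and> ?Q n x y" by auto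
  qed
  with that show ?thesis by blast
qed

lemma difference_quotient_lower_bound:
  fixes x y z :: "'a::metric_space" and u v w :: "'b::metric_space"
  assumes "e > 0"
    and "dist y z + 1 \<le> dist x z"
    and "e * dist x z \<le> dist u w"
    and "2 * dist v w \<le> dist u w"
  shows "e / 4 \<le> dist u v / dist x y"
proof -
  have xy_le: "dist x y \<le> 2 * dist x z"
    using dist_triangle2[of x y z] assms(2) by linarith
  have xy_pos: "0 < dist x y"
    using dist_triangle[of x z y] assms(2) by linarith
  have uv_ge: "dist u w / 2 \<le> dist u v"
    using dist_triangle[of u w v] assms(4) by (simp add: dist_commute)
  have xz_pos: "0 < dist x z"
    using assms(2) zero_le_dist[of y z] by linarith
  have "e / 4 = (e * dist x z / 2) / (2 * dist x z)"
    using xz_pos by (simp add: field_simps)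
  also have "\<dots> \<le> (e * dist x z / 2) / dist x y"
    using xy_le xy_pos xz_pos \<open>e > 0\<close> by (intro divide_left_mono) auto
  also have "\<dots> \<le> dist u v / dist x y"
    using assms(3) uv_ge xy_pos by (intro divide_right_mono) auto
  finally show ?thesis .
qed

theorem lemma2p4:
  fixes zM :: "'a::metric_space" and zN :: "'b::metric_space" and f :: "'a \<Rightarrow> 'b"
  assumes "\<not> bounded (UNIV :: 'a set)"
    and "P3 zM f"
  shows "radially_flat zM zN f"
proof (rule ccontr)
  assume "\<not> radially_flat zM zN f"
  then obtain e where e: "e > 0"
    and far: "\<And>R. \<exists>x. R \<le> dist x zM \<and> e * dist x zM \<le> dist (f x) zN"
    using not_radially_flat_imp_far_points by metis
  then obtain s where s_ratio: "\<And>n. e * dist (s n) zM \<le> dist (f (s n)) zN"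
    and s_step: "\<And>n. dist (s n) zM + 1 \<le> dist (s (Suc n)) zM"
    and fs_step: "\<And>n. 2 * dist (f (s n)) zN + 1 \<le> dist (f (s (Suc n))) zN"
    using far_sequence_with_fast_growing_image by metis
  have s_lim: "filterlim (\<lambda>n. dist (s n) zM) at_top sequentially"
    using s_step by (rule filterlim_at_top_if_unit_increments)
  have "filterlim (\<lambda>n. dist (f (s n)) zN) at_top sequentially"
    using fs_step by (intro filterlim_at_top_if_unit_increments) (smt (verit) zero_le_dist)
  then have "filterlim (\<lambda>n. dist (f (s (Suc n))) zN) at_top sequentially"
    using filterlim_sequentially_Suc[of "\<lambda>n. dist (f (s n)) zN"] by simp
  then have no_acc: "\<not> seq_accumulation_point (\<lambda>n. (f (s (Suc n)), f (s n))) p" for p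
    by (intro not_seq_accumulation_point_if_escaping[of _ "(zN, zN)"] filterlim_dist_Pair_at_top_if_fst)
  have "ereal (e / 4) \<le> ereal (dist (f (s (Suc n))) (f (s n)) / dist (s (Suc n)) (s n))" for n
    using difference_quotient_lower_bound[OF e s_step s_ratio, of "f (s n)" n] fs_step[of n] by simp
  then have "ereal (e / 4) \<le> Liminf sequentially
      (\<lambda>n. ereal (dist (f (s (Suc n))) (f (s n)) / dist (s (Suc n)) (s n)))"
    by (intro Liminf_bounded always_eventually) auto
  with e have "Liminf sequentially
      (\<lambda>n. ereal (dist (f (s (Suc n))) (f (s n)) / dist (s (Suc n)) (s n))) \<noteq> 0"
    by (auto simp: zero_ereal_def)
  moreover have "\<forall>n. s (Suc n) \<noteq> s n"
    using s_step by (metis add_le_same_cancel1 not_one_le_zero)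
  moreover have "filterlim (\<lambda>n. dist (s (Suc n)) zM) at_top sequentially"
    using filterlim_sequentially_Suc[of "\<lambda>n. dist (s n) zM"] s_lim by simp
  ultimately show False
    using assms(2)[unfolded P3_def, rule_format, of "\<lambda>n. s (Suc n)" s] no_acc s_lim by blast
qed

end
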